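(* Let $\beta,\lambda\ge0$ with $\lambda+\beta>0$, let $\gamma\ge 0$ and $x\in\mathbb{R}$ with $x^2\le\gamma^2$, and let $f(\lambda)=\frac{\lambda\beta}{\lambda+\beta}+x^2$. Then (1) $f(\lambda)\le\beta+\gamma^2$; (2) $f(\lambda)\le\lambda+\gamma^2$; (3) $f(\lambda)\le\max\Big\{\lambda,\ \frac{3\gamma^2+\sqrt{\gamma^4+4\gamma^2\beta}}{2}\Big\}$. *)

theory Defs
  imports Complex_Main
begin

end

theory Submission
  imports Defs
begin

text \<open>The first two bounds hold because \<open>\<lambda>\<beta>/(\<lambda>+\<beta>)\<close> is at most \<open>min \<lambda> \<beta>\<close>.
For the third, with \<open>g = \<gamma>\<^sup>2\<close>: the inequality \<open>\<lambda>\<beta>/(\<lambda>+\<beta>) + g \<le> \<lambda>\<close> is equivalent to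
\<open>\<lambda>\<^sup>2 - g\<lambda> - g\<beta> \<ge> 0\<close>, which holds once \<open>\<lambda>\<close> exceeds the positive root
\<open>r = (g + \<surd>(g\<^sup>2 + 4g\<beta>))/2\<close>; for smaller \<open>\<lambda>\<close> the bound \<open>\<lambda>\<beta>/(\<lambda>+\<beta>) \<le> \<lambda> < r\<close> gives
\<open>f < r + g = (3\<gamma>\<^sup>2 + \<surd>(\<gamma>\<^sup>4 + 4\<gamma>\<^sup>2\<beta>))/2\<close>.\<close>

lemma harmonic_le_right:
  fixes a b :: real
  assumes "a \<ge> 0" "b \<ge> 0" "a + b > 0"
  shows "a * b / (a + b) \<le> b"
proof -
  have "a * b \<le> b * (a + b)" using assms by (simp add: algebra_simps)
  then show ?thesis using assms(3) by (simp add: divide_le_eq mult.commute)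
qed

lemma harmonic_le_left:
  fixes a b :: real
  assumes "a \<ge> 0" "b \<ge> 0" "a + b > 0"
  shows "a * b / (a + b) \<le> a"
  using harmonic_le_right[of b a] assms by (simp add: mult.commute add.commute)

lemma harmonic_plus_le_left_if_root_le:
  fixes a b g :: real
  assumes "a \<ge> 0" "b \<ge> 0" "a + b > 0" "g \<ge> 0"
    and root_le: "(g + sqrt (g^2 + 4 * g * b)) / 2 \<le> a"
  shows "a * b / (a + b) + g \<le> a"
proof -
  define q where "q = sqrt (g^2 + 4 * g * b)"
  have q_sq: "q^2 = g^2 + 4 * g * b"
    unfolding q_def using assms by simp
  have "g \<le> q"
    unfolding q_def using assms by (simp add: real_le_rsqrt)
  have "a^2 - g * a - g * b = (a - (g + q) / 2) * (a - (g - q) / 2)"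
    using q_sq by (simp add: field_simps power2_eq_square)
  also have "\<dots> \<ge> 0"
    using root_le \<open>g \<le> q\<close> \<open>a \<ge> 0\<close> unfolding q_def by (intro mult_nonneg_nonneg) auto
  finally have "a * b + g * (a + b) \<le> a * (a + b)"
    by (simp add: algebra_simps power2_eq_square)
  then show ?thesis
    using assms(3) by (simp add: field_simps)
qed

lemma harmonic_plus_le_max:
  fixes a b g :: real
  assumes "a \<ge> 0" "b \<ge> 0" "a + b > 0" "g \<ge> 0"
  shows "a * b / (a + b) + g \<le> max a (g + (g + sqrt (g^2 + 4 * g * b)) / 2)"
proof (cases "(g + sqrt (g^2 + 4 * g * b)) / 2 \<le> a")
  case True
  then show ?thesis using harmonic_plus_le_left_if_root_le assms by fastforce
next
  case False
  then show ?thesis using harmonic_le_left[OF assms(1-3)] by linarith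
qed

theorem lemma6:
  fixes \<beta> lam \<gamma> x :: real
  assumes "\<beta> \<ge> 0" and "lam \<ge> 0" and "lam + \<beta> > 0"
    and "\<gamma> \<ge> 0" and "x^2 \<le> \<gamma>^2"
  defines "f \<equiv> lam * \<beta> / (lam + \<beta>) + x^2"
  shows "f \<le> \<beta> + \<gamma>^2 \<and>
         f \<le> lam + \<gamma>^2 \<and>
         f \<le> max lam ((3 * \<gamma>^2 + sqrt (\<gamma>^4 + 4 * \<gamma>^2 * \<beta>)) / 2)"
proof -
  have f_le: "f \<le> lam * \<beta> / (lam + \<beta>) + \<gamma>^2"
    unfolding f_def using assms(5) by simp
  have root_eq: "(3 * \<gamma>^2 + sqrt (\<gamma>^4 + 4 * \<gamma>^2 * \<beta>)) / 2
        = \<gamma>^2 + (\<gamma>^2 + sqrt ((\<gamma>^2)^2 + 4 * \<gamma>^2 * \<beta>)) / 2"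
    by (simp add: power_mult[symmetric])
  have "f \<le> max lam ((3 * \<gamma>^2 + sqrt (\<gamma>^4 + 4 * \<gamma>^2 * \<beta>)) / 2)"
    unfolding root_eq using f_le harmonic_plus_le_max[of lam \<beta> "\<gamma>^2"] assms(1-3)
    by (meson order_trans zero_le_power2)
  moreover have "f \<le> \<beta> + \<gamma>^2" and "f \<le> lam + \<gamma>^2"
    using f_le harmonic_le_right[of lam \<beta>] harmonic_le_left[of lam \<beta>] assms(1-3) by simp_all
  ultimately show ?thesis by blast
qed

end
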